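(* Let $G$ be a finite $(n+1)$-partite graph with ordered parts $(V^0,\ldots,V^n)$ which is partite type-regular. Then its symmetrization $G^{\circledast S_{n+1}}=\circledast_{\pi\in S_{n+1}}\pi(G)$ is hyper-regular, i.e. for every $1\le m\le n$ all cliques of size $m$ in $G^{\circledast S_{n+1}}$ have joint neighbourhoods of the same size.
   Context: Let $I=\{0,\ldots,n\}$. For an $(n+1)$-partite graph with parts $(V^i)_{i\in I}$ and $J\subseteq I$, a clique is of type $J$ if it has exactly one vertex in $V^j$ for each $j\in J$ and no others. The link of a clique $C$ is the set of vertices adjacent to all vertices of $C$. $G$ is partite type-regular if for every $J\subsetneq I$ and $i\in I\setminus J$ there is $d_J(i)\in\mathbb{N}$ with $|V^i\cap\mathrm{link}(C)|=d_J(i)$ for every clique $C$ of type $J$. Partite product: for $(n+1)$-partite $G_1,G_2$, $G_1\circledast G_2$ has ordered parts $(V_1^i\times V_2^i)_{i\in I}$ and $(a,b)\in V_1^i\times V_2^i$, $(c,d)\in V_1^j\times V_2^j$ ($i\neq j$) are adjacent iff $\{a,c\}\in E_1$ and $\{b,d\}\in E_2$; iterating gives $\circledast$ of finitely many graphs. For $\pi\in S_{n+1}$ (permutations of $I$), $\pi(G)$ is the same graph with ordered parts $(V^{\pi(0)},\ldots,V^{\pi(n)})$. Hyper-regularity (as in the paper): $G$ is $(d_0,\ldots,d_{n-1})$-regular if it is $d_0$-regular and for each $1\le i\le n-1$ the subgraph induced on the joint neighbourhood of every $i$-clique is $d_i$-regular; equivalently, for each $1\le m\le n$ the joint neighbourhood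 of every clique of size $m$ has the same size $d_{m-1}$. *)

theory Defs
  imports "HOL-Combinatorics.Permutations"
begin

definition partite_graph :: "nat \<Rightarrow> (nat \<Rightarrow> 'a set) \<Rightarrow> ('a \<Rightarrow> 'a \<Rightarrow> bool) \<Rightarrow> bool" where
  "partite_graph n V E \<longleftrightarrow>
     (\<forall>i\<le>n. \<forall>j\<le>n. i \<noteq> j \<longrightarrow> V i \<inter> V j = {}) \<and>
     (\<forall>x y. E x y \<longleftrightarrow> E y x) \<and>
     (\<forall>x y. E x y \<longrightarrow> (\<exists>i\<le>n. \<exists>j\<le>n. i \<noteq> j \<and> x \<in> V i \<and> y \<in> V j))"

definition verts :: "nat \<Rightarrow> (nat \<Rightarrow> 'a set) \<Rightarrow> 'a set" where
  "verts n V = (\<Union>i\<le>n. V i)"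

definition is_clique :: "('a \<Rightarrow> 'a \<Rightarrow> bool) \<Rightarrow> 'a set \<Rightarrow> bool" where
  "is_clique E C \<longleftrightarrow> (\<forall>x\<in>C. \<forall>y\<in>C. x \<noteq> y \<longrightarrow> E x y)"

definition link :: "'a set \<Rightarrow> ('a \<Rightarrow> 'a \<Rightarrow> bool) \<Rightarrow> 'a set \<Rightarrow> 'a set" where
  "link Vs E C = {v \<in> Vs. \<forall>c\<in>C. E v c}"

definition clique_of_type :: "nat \<Rightarrow> (nat \<Rightarrow> 'a set) \<Rightarrow> ('a \<Rightarrow> 'a \<Rightarrow> bool) \<Rightarrow> nat set \<Rightarrow> 'a set \<Rightarrow> bool" where
  "clique_of_type n V E J C \<longleftrightarrow>
     C \<subseteq> verts n V \<and> is_clique E C \<and>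
     (\<forall>j\<in>J. card (C \<inter> V j) = 1) \<and> (\<forall>j\<in>{..n} - J. C \<inter> V j = {})"

definition partite_type_regular :: "nat \<Rightarrow> (nat \<Rightarrow> 'a set) \<Rightarrow> ('a \<Rightarrow> 'a \<Rightarrow> bool) \<Rightarrow> bool" where
  "partite_type_regular n V E \<longleftrightarrow>
     (\<forall>J i. J \<subset> {..n} \<longrightarrow> i \<in> {..n} - J \<longrightarrow>
        (\<exists>d::nat. \<forall>C. clique_of_type n V E J C \<longrightarrow> card (V i \<inter> link (verts n V) E C) = d))"

text \<open>Symmetrization: the partite product of pi(G) over all permutations pi of {..n}.
  A vertex of part i is a tuple indexed by permutations, i.e. an (extensional) function
  f with f pi in V (pi i) for every permutation pi.\<close>
definition sym_part :: "nat \<Rightarrow> (nat \<Rightarrow> 'a set) \<Rightarrow> nat \<Rightarrow> ((nat \<Rightarrow> nat) \<Rightarrow> 'a) set" where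
  "sym_part n V i = {f. (\<forall>\<pi>. \<pi> permutes {..n} \<longrightarrow> f \<pi> \<in> V (\<pi> i)) \<and>
                        (\<forall>\<pi>. \<not> \<pi> permutes {..n} \<longrightarrow> f \<pi> = undefined)}"

definition sym_edge :: "nat \<Rightarrow> (nat \<Rightarrow> 'a set) \<Rightarrow> ('a \<Rightarrow> 'a \<Rightarrow> bool) \<Rightarrow>
    ((nat \<Rightarrow> nat) \<Rightarrow> 'a) \<Rightarrow> ((nat \<Rightarrow> nat) \<Rightarrow> 'a) \<Rightarrow> bool" where
  "sym_edge n V E f g \<longleftrightarrow>
     (\<exists>i\<le>n. \<exists>j\<le>n. i \<noteq> j \<and> f \<in> sym_part n V i \<and> g \<in> sym_part n V j \<and>
        (\<forall>\<pi>. \<pi> permutes {..n} \<longrightarrow> E (f \<pi>) (g \<pi>)))"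

definition hyper_regular :: "nat \<Rightarrow> 'b set \<Rightarrow> ('b \<Rightarrow> 'b \<Rightarrow> bool) \<Rightarrow> bool" where
  "hyper_regular n Vs E \<longleftrightarrow>
     (\<forall>m. 1 \<le> m \<and> m \<le> n \<longrightarrow>
        (\<exists>d::nat. \<forall>C. C \<subseteq> Vs \<and> is_clique E C \<and> card C = m \<longrightarrow> card (link Vs E C) = d))"

end

theory Submission
  imports Defs
begin

(*
  A vertex of part i of the symmetrization is a family (f \<pi>) indexed by the permutations \<pi>
  of {0..n} with f \<pi> in V (\<pi> i), and it is adjacent to a clique C exactly when each
  coordinate f \<pi> lies in the link, in G, of the projected clique {c \<pi> | c \<in> C}. If C
  meets the parts J, its projection at \<pi> is a clique of type \<pi> ` J in G, so type-regularity
  gives |link C| = sum over i \<notin> J of the product over \<pi> of d_{\<pi> ` J}(\<pi> i).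
  The symmetric group acts transitively on the pairs (J, i) with |J| = m and i \<notin> J, so
  reindexing the product by \<pi> \<mapsto> \<pi> \<circ> \<tau> shows that every summand equals the product
  over \<pi> of d_{\<pi> ` {0..m-1}}(\<pi> m), which depends on m = |C| only.
*)

lemma bij_betw_extends_to_permutation:
  assumes "finite S" "A \<subseteq> S" "B \<subseteq> S" "bij_betw f A B"
  obtains \<tau> where "\<tau> permutes S" "\<And>x. x \<in> A \<Longrightarrow> \<tau> x = f x"
proof -
  have "card (S - A) = card (S - B)"
    using assms by (simp add: card_Diff_subset finite_subset bij_betw_same_card)
  then obtain g where g: "bij_betw g (S - A) (S - B)"
    using finite_same_card_bij assms(1) by blast
  define \<tau> where "\<tau> x = (if x \<in> A then f x else if x \<in> S then g x else x)" for x
  have "bij_betw \<tau> A B"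
    using assms(4) by (rule bij_betw_cong[THEN iffD1, rotated]) (simp add: \<tau>_def)
  moreover have "bij_betw \<tau> (S - A) (S - B)"
    using g by (rule bij_betw_cong[THEN iffD1, rotated]) (simp add: \<tau>_def)
  ultimately have "bij_betw \<tau> (A \<union> (S - A)) (B \<union> (S - B))"
    by (rule bij_betw_combine) blast
  then have "bij_betw \<tau> S S"
    using assms(2,3) by (simp add: Un_absorb1 Un_Diff_cancel)
  then have "\<tau> permutes S"
    by (rule bij_imp_permutes) (use assms(2) in \<open>auto simp: \<tau>_def\<close>)
  then show thesis
    by (rule that) (simp add: \<tau>_def)
qed

lemma permutes_map_subset_and_point:
  assumes "finite S" "J \<subseteq> S" "J' \<subseteq> S" "card J' = card J" "i \<in> S - J" "i' \<in> S - J'"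
  obtains \<tau> where "\<tau> permutes S" "\<tau> ` J' = J" "\<tau> i' = i"
proof -
  have "finite J" "finite J'"
    using assms(1-3) finite_subset by auto
  then obtain b where b: "bij_betw b J' J"
    using finite_same_card_bij assms(4) by metis
  moreover have "bij_betw (b(i' := i)) J' J \<longleftrightarrow> bij_betw b J' J"
    using assms(6) by (intro bij_betw_cong) auto
  ultimately have "bij_betw (b(i' := i)) (J' \<union> {i'}) (J \<union> {i})"
    using assms(5) by (intro bij_betw_combine) auto
  then obtain \<tau> where "\<tau> permutes S" and \<tau>: "\<And>x. x \<in> J' \<union> {i'} \<Longrightarrow> \<tau> x = (b(i' := i)) x"
    using assms by (elim bij_betw_extends_to_permutation[rotated 3]) auto
  moreover have "\<tau> ` J' = J"
    using \<tau> assms(6) b by (auto simp: bij_betw_def image_def)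
  ultimately show thesis
    using that \<tau> by simp
qed

lemma prod_permutations_compose_right:
  assumes "q permutes S"
  shows "prod f {p. p permutes S} = prod (\<lambda>p. f (p \<circ> q)) {p. p permutes S}"
proof -
  have "inj_on (\<lambda>p. p \<circ> q) {p. p permutes S}"
    by (rule inj_onI) (metis permutes_inv_o(1)[OF assms] comp_assoc comp_id)
  moreover have "(\<lambda>p. p \<circ> q) ` {p. p permutes S} = {p. p permutes S}"
    using image_compose_permutations_right[OF assms] by auto
  ultimately show ?thesis
    using prod.reindex[of "\<lambda>p. p \<circ> q" "{p. p permutes S}" f] by (simp add: o_def)
qed

lemma prod_permutations_image_point_eq:
  fixes D :: "'a set \<Rightarrow> 'a \<Rightarrow> 'b::comm_monoid_mult"
  assumes "finite S" "J \<subseteq> S" "J' \<subseteq> S" "card J' = card J" "i \<in> S - J" "i' \<in> S - J'"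
  shows "(\<Prod>\<pi> | \<pi> permutes S. D (\<pi> ` J) (\<pi> i)) = (\<Prod>\<pi> | \<pi> permutes S. D (\<pi> ` J') (\<pi> i'))"
proof -
  obtain \<tau> where \<tau>: "\<tau> permutes S" "\<tau> ` J' = J" "\<tau> i' = i"
    using permutes_map_subset_and_point[OF assms] by metis
  have "(\<Prod>\<pi> | \<pi> permutes S. D (\<pi> ` J) (\<pi> i))
      = (\<Prod>\<pi> | \<pi> permutes S. D ((\<pi> \<circ> \<tau>) ` J') ((\<pi> \<circ> \<tau>) i'))"
    by (intro prod.cong refl) (simp only: image_comp[symmetric] o_apply \<tau>(2,3))
  also have "\<dots> = (\<Prod>\<pi> | \<pi> permutes S. D (\<pi> ` J') (\<pi> i'))"
    using prod_permutations_compose_right[OF \<tau>(1), of "\<lambda>\<pi>. D (\<pi> ` J') (\<pi> i')"] by simp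
  finally show ?thesis .
qed

lemma permutes_atMost_le: "\<pi> permutes {..n} \<Longrightarrow> i \<le> n \<Longrightarrow> \<pi> i \<le> n"
  using permutes_in_image[of \<pi> "{..n}" i] by simp

lemma sym_part_eq_PiE: "sym_part n V i = (\<Pi>\<^sub>E \<pi>\<in>{\<pi>. \<pi> permutes {..n}}. V (\<pi> i))"
  unfolding sym_part_def PiE_def Pi_def extensional_def by auto

lemma finite_sym_part:
  assumes "\<forall>i\<le>n. finite (V i)" "i \<le> n"
  shows "finite (sym_part n V i)"
  unfolding sym_part_eq_PiE
  using assms by (intro finite_PiE) (auto simp: finite_permutations permutes_atMost_le)

lemma sym_part_apply: "f \<in> sym_part n V i \<Longrightarrow> \<pi> permutes {..n} \<Longrightarrow> f \<pi> \<in> V (\<pi> i)"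
  unfolding sym_part_def by blast

lemma sym_edge_apply: "sym_edge n V E f g \<Longrightarrow> \<pi> permutes {..n} \<Longrightarrow> E (f \<pi>) (g \<pi>)"
  unfolding sym_edge_def by blast

abbreviation sym_verts :: "nat \<Rightarrow> (nat \<Rightarrow> 'a set) \<Rightarrow> ((nat \<Rightarrow> nat) \<Rightarrow> 'a) set" where
  "sym_verts n V \<equiv> \<Union>i\<le>n. sym_part n V i"

context
  fixes n :: nat and V :: "nat \<Rightarrow> 'a set" and E :: "'a \<Rightarrow> 'a \<Rightarrow> bool"
  assumes partite: "partite_graph n V E"
begin

lemma part_unique: "i \<le> n \<Longrightarrow> j \<le> n \<Longrightarrow> x \<in> V i \<Longrightarrow> x \<in> V j \<Longrightarrow> i = j"
  using partite unfolding partite_graph_def by blast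

lemma sym_part_unique:
  "i \<le> n \<Longrightarrow> j \<le> n \<Longrightarrow> f \<in> sym_part n V i \<Longrightarrow> f \<in> sym_part n V j \<Longrightarrow> i = j"
  using sym_part_apply[OF _ permutes_id] part_unique by (metis id_apply)

lemma no_sym_edge_within_part:
  assumes "i \<le> n" "f \<in> sym_part n V i" "g \<in> sym_part n V i"
  shows "\<not> sym_edge n V E f g"
proof
  assume "sym_edge n V E f g"
  then have "E (f id) (g id)"
    using sym_edge_apply permutes_id by blast
  moreover have "f id \<in> V i" "g id \<in> V i"
    using assms sym_part_apply[OF _ permutes_id] by (metis id_apply)+
  ultimately show False
    using partite assms(1) part_unique unfolding partite_graph_def by metis
qed

definition sym_clique_type :: "((nat \<Rightarrow> nat) \<Rightarrow> 'a) set \<Rightarrow> nat set" where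
  "sym_clique_type C = {j \<in> {..n}. C \<inter> sym_part n V j \<noteq> {}}"

lemma sym_clique_type_subset: "sym_clique_type C \<subseteq> {..n}"
  unfolding sym_clique_type_def by auto

lemma sym_clique_inter_sym_part:
  assumes "is_clique (sym_edge n V E) C" "j \<le> n" "c \<in> C" "c \<in> sym_part n V j"
  shows "C \<inter> sym_part n V j = {c}"
  using assms no_sym_edge_within_part unfolding is_clique_def by blast

lemma card_sym_clique_type:
  assumes "C \<subseteq> sym_verts n V" "is_clique (sym_edge n V E) C"
  shows "card (sym_clique_type C) = card C"
proof -
  let ?T = "sym_clique_type C"
  have single: "\<exists>c. C \<inter> sym_part n V j = {c}" if "j \<in> ?T" for j
    using that sym_clique_inter_sym_part[OF assms(2)] unfolding sym_clique_type_def by blast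
  have "C = (\<Union>j\<in>?T. C \<inter> sym_part n V j)"
    using assms(1) unfolding sym_clique_type_def by blast
  also have "card \<dots> = (\<Sum>j\<in>?T. card (C \<inter> sym_part n V j))"
  proof (rule card_UN_disjoint)
    show "finite ?T"
      using sym_clique_type_subset finite_subset by blast
    show "\<forall>j\<in>?T. finite (C \<inter> sym_part n V j)"
      using single by fastforce
    show "\<forall>i\<in>?T. \<forall>j\<in>?T. i \<noteq> j \<longrightarrow> C \<inter> sym_part n V i \<inter> (C \<inter> sym_part n V j) = {}"
      using sym_part_unique unfolding sym_clique_type_def by blast
  qed
  also have "\<dots> = (\<Sum>j\<in>?T. 1)"
    by (intro sum.cong refl) (use single in force)
  finally show ?thesis
    by simp
qed

lemma sym_clique_projection_inter_part:
  assumes "C \<subseteq> sym_verts n V" "\<pi> permutes {..n}" "j \<le> n"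
  shows "(\<lambda>c. c \<pi>) ` C \<inter> V (\<pi> j) = (\<lambda>c. c \<pi>) ` (C \<inter> sym_part n V j)"
proof (intro equalityI subsetI)
  fix x assume "x \<in> (\<lambda>c. c \<pi>) ` C \<inter> V (\<pi> j)"
  then obtain c j' where c: "c \<in> C" "x = c \<pi>" "x \<in> V (\<pi> j)" "j' \<le> n" "c \<in> sym_part n V j'"
    using assms(1) by blast
  then have "\<pi> j' = \<pi> j"
    using part_unique sym_part_apply assms(2,3) permutes_atMost_le by metis
  then have "j' = j"
    using permutes_inj[OF assms(2)] by (simp add: inj_eq)
  then show "x \<in> (\<lambda>c. c \<pi>) ` (C \<inter> sym_part n V j)"
    using c by blast
qed (use assms(2) sym_part_apply in blast)

lemma sym_clique_projection_of_type:
  assumes "C \<subseteq> sym_verts n V" "is_clique (sym_edge n V E) C" "\<pi> permutes {..n}"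
  shows "clique_of_type n V E (\<pi> ` sym_clique_type C) ((\<lambda>c. c \<pi>) ` C)"
  unfolding clique_of_type_def
proof (intro conjI ballI)
  show "(\<lambda>c. c \<pi>) ` C \<subseteq> verts n V"
  proof
    fix x assume "x \<in> (\<lambda>c. c \<pi>) ` C"
    then obtain c j where "x = c \<pi>" "j \<le> n" "c \<in> sym_part n V j"
      using assms(1) by blast
    moreover from this have "c \<pi> \<in> V (\<pi> j)" "\<pi> j \<le> n"
      using sym_part_apply[OF _ assms(3)] permutes_atMost_le[OF assms(3)] by auto
    ultimately show "x \<in> verts n V"
      unfolding verts_def by blast
  qed
  show "is_clique E ((\<lambda>c. c \<pi>) ` C)"
    using assms(2,3) sym_edge_apply unfolding is_clique_def by fastforce
next
  fix k assume "k \<in> \<pi> ` sym_clique_type C"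
  then obtain j c where "k = \<pi> j" "j \<le> n" "c \<in> C" "c \<in> sym_part n V j"
    unfolding sym_clique_type_def by blast
  then show "card ((\<lambda>c. c \<pi>) ` C \<inter> V k) = 1"
    using sym_clique_projection_inter_part sym_clique_inter_sym_part assms by simp
next
  fix k assume k: "k \<in> {..n} - \<pi> ` sym_clique_type C"
  define j where "j = inv \<pi> k"
  have "\<pi> j = k"
    unfolding j_def using permutes_inverses(1)[OF assms(3)] .
  moreover have "j \<le> n"
    unfolding j_def using k permutes_atMost_le[OF permutes_inv[OF assms(3)]] by simp
  moreover have "j \<notin> sym_clique_type C"
    using k \<open>\<pi> j = k\<close> by blast
  ultimately show "(\<lambda>c. c \<pi>) ` C \<inter> V k = {}"
    using sym_clique_projection_inter_part[OF assms(1,3)] unfolding sym_clique_type_def by auto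
qed

lemma sym_edge_iff:
  assumes "i \<le> n" "j \<le> n" "i \<noteq> j" "f \<in> sym_part n V i" "g \<in> sym_part n V j"
  shows "sym_edge n V E f g \<longleftrightarrow> (\<forall>\<pi>. \<pi> permutes {..n} \<longrightarrow> E (f \<pi>) (g \<pi>))"
  using assms unfolding sym_edge_def by blast

lemma sym_part_inter_sym_link:
  assumes "C \<subseteq> sym_verts n V" "i \<le> n" "i \<notin> sym_clique_type C"
  shows "sym_part n V i \<inter> link (sym_verts n V) (sym_edge n V E) C
       = (\<Pi>\<^sub>E \<pi>\<in>{\<pi>. \<pi> permutes {..n}}. V (\<pi> i) \<inter> link (verts n V) E ((\<lambda>c. c \<pi>) ` C))"
proof -
  have edge: "sym_edge n V E f c \<longleftrightarrow> (\<forall>\<pi>. \<pi> permutes {..n} \<longrightarrow> E (f \<pi>) (c \<pi>))"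
    if f: "f \<in> sym_part n V i" and c: "c \<in> C" for f c
  proof -
    obtain j where j: "j \<le> n" "c \<in> sym_part n V j"
      using assms(1) c by blast
    moreover have "j \<noteq> i"
      using assms(3) j c unfolding sym_clique_type_def by blast
    ultimately show ?thesis
      using sym_edge_iff assms(2) f by blast
  qed
  have verts: "x \<in> verts n V" if "x \<in> V (\<pi> i)" "\<pi> permutes {..n}" for x \<pi>
    using that permutes_atMost_le[OF that(2) assms(2)] unfolding verts_def by blast
  show ?thesis
  proof (intro equalityI subsetI)
    fix f assume "f \<in> sym_part n V i \<inter> link (sym_verts n V) (sym_edge n V E) C"
    then show "f \<in> (\<Pi>\<^sub>E \<pi>\<in>{\<pi>. \<pi> permutes {..n}}. V (\<pi> i) \<inter> link (verts n V) E ((\<lambda>c. c \<pi>) ` C))"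
      using edge unfolding link_def by (auto simp: sym_part_eq_PiE PiE_iff intro: verts)
  next
    fix f assume f: "f \<in> (\<Pi>\<^sub>E \<pi>\<in>{\<pi>. \<pi> permutes {..n}}. V (\<pi> i) \<inter> link (verts n V) E ((\<lambda>c. c \<pi>) ` C))"
    then have "f \<in> sym_part n V i"
      by (auto simp: sym_part_eq_PiE PiE_iff)
    then show "f \<in> sym_part n V i \<inter> link (sym_verts n V) (sym_edge n V E) C"
      using f edge assms(2) unfolding link_def by (auto simp: PiE_iff)
  qed
qed

lemma sym_part_inter_sym_link_type:
  assumes "C \<subseteq> sym_verts n V" "i \<in> sym_clique_type C"
  shows "sym_part n V i \<inter> link (sym_verts n V) (sym_edge n V E) C = {}"
  using assms no_sym_edge_within_part unfolding sym_clique_type_def link_def by blast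

end

(* The paper's d_K(k); the choice is meaningful only for partite type-regular graphs. *)
definition type_degree :: "nat \<Rightarrow> (nat \<Rightarrow> 'a set) \<Rightarrow> ('a \<Rightarrow> 'a \<Rightarrow> bool) \<Rightarrow> nat set \<Rightarrow> nat \<Rightarrow> nat" where
  "type_degree n V E K k =
     (SOME d. \<forall>C. clique_of_type n V E K C \<longrightarrow> card (V k \<inter> link (verts n V) E C) = d)"

lemma card_link_clique_of_type:
  assumes "partite_type_regular n V E" "K \<subset> {..n}" "k \<in> {..n} - K" "clique_of_type n V E K C"
  shows "card (V k \<inter> link (verts n V) E C) = type_degree n V E K k"
proof -
  have "\<exists>d. \<forall>C. clique_of_type n V E K C \<longrightarrow> card (V k \<inter> link (verts n V) E C) = d"
    using assms(1-3) unfolding partite_type_regular_def by blast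
  from someI_ex[OF this] show ?thesis
    using assms(4) unfolding type_degree_def by blast
qed

lemma card_sym_part_inter_sym_link:
  assumes partite: "partite_graph n V E" and regular: "partite_type_regular n V E"
    and C: "C \<subseteq> sym_verts n V" "is_clique (sym_edge n V E) C"
    and i: "i \<in> {..n} - sym_clique_type n V C"
  defines "T \<equiv> sym_clique_type n V C"
  shows "card (sym_part n V i \<inter> link (sym_verts n V) (sym_edge n V E) C)
       = (\<Prod>\<pi> | \<pi> permutes {..n}. type_degree n V E (\<pi> ` T) (\<pi> i))"
proof -
  have "card (sym_part n V i \<inter> link (sym_verts n V) (sym_edge n V E) C)
      = (\<Prod>\<pi> | \<pi> permutes {..n}. card (V (\<pi> i) \<inter> link (verts n V) E ((\<lambda>c. c \<pi>) ` C)))"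
    using i sym_part_inter_sym_link[OF partite C(1)] by (simp add: card_PiE finite_permutations)
  also have "\<dots> = (\<Prod>\<pi> | \<pi> permutes {..n}. type_degree n V E (\<pi> ` T) (\<pi> i))"
  proof (rule prod.cong[OF refl])
    fix \<pi> assume "\<pi> \<in> {\<pi>. \<pi> permutes {..n}}"
    then have \<pi>: "\<pi> permutes {..n}" by simp
    have "\<pi> ` T \<subseteq> {..n}"
      using \<pi> permutes_atMost_le sym_clique_type_subset[OF partite] unfolding T_def by blast
    moreover have "\<pi> i \<in> {..n} - \<pi> ` T"
      using i \<pi> permutes_atMost_le permutes_inj[OF \<pi>] unfolding T_def by (auto simp: inj_eq)
    ultimately show "card (V (\<pi> i) \<inter> link (verts n V) E ((\<lambda>c. c \<pi>) ` C)) = type_degree n V E (\<pi> ` T) (\<pi> i)"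
      using card_link_clique_of_type[OF regular] sym_clique_projection_of_type[OF partite C \<pi>]
      unfolding T_def by blast
  qed
  finally show ?thesis .
qed

lemma card_sym_link:
  assumes partite: "partite_graph n V E" and fin: "\<forall>i\<le>n. finite (V i)"
    and regular: "partite_type_regular n V E"
    and C: "C \<subseteq> sym_verts n V" "is_clique (sym_edge n V E) C"
  defines "T \<equiv> sym_clique_type n V C"
  shows "card (link (sym_verts n V) (sym_edge n V E) C)
       = (\<Sum>i\<in>{..n} - T. \<Prod>\<pi> | \<pi> permutes {..n}. type_degree n V E (\<pi> ` T) (\<pi> i))"
proof -
  let ?L = "link (sym_verts n V) (sym_edge n V E) C"
  have "card ?L = card (\<Union>i\<le>n. sym_part n V i \<inter> ?L)"
    by (rule arg_cong[where f = card]) (auto simp: link_def)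
  also have "\<dots> = (\<Sum>i\<le>n. card (sym_part n V i \<inter> ?L))"
    using finite_sym_part[OF fin] sym_part_unique[OF partite] by (intro card_UN_disjoint) auto
  also have "\<dots> = (\<Sum>i\<in>{..n} - T. card (sym_part n V i \<inter> ?L))"
    using sym_part_inter_sym_link_type[OF partite C(1)] unfolding T_def
    by (intro sum.mono_neutral_right) auto
  also have "\<dots> = (\<Sum>i\<in>{..n} - T. \<Prod>\<pi> | \<pi> permutes {..n}. type_degree n V E (\<pi> ` T) (\<pi> i))"
    using card_sym_part_inter_sym_link[OF partite regular C] unfolding T_def by simp
  finally show ?thesis .
qed

lemma card_sym_link_eq:
  assumes partite: "partite_graph n V E" and fin: "\<forall>i\<le>n. finite (V i)"
    and regular: "partite_type_regular n V E"
    and C: "C \<subseteq> sym_verts n V" "is_clique (sym_edge n V E) C" "card C \<le> n"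
  shows "card (link (sym_verts n V) (sym_edge n V E) C)
       = (Suc n - card C) * (\<Prod>\<pi> | \<pi> permutes {..n}. type_degree n V E (\<pi> ` {..<card C}) (\<pi> (card C)))"
proof -
  let ?T = "sym_clique_type n V C" and ?m = "card C"
  let ?d = "\<Prod>\<pi> | \<pi> permutes {..n}. type_degree n V E (\<pi> ` {..<?m}) (\<pi> ?m)"
  have T: "?T \<subseteq> {..n}" "card ?T = ?m"
    using sym_clique_type_subset[OF partite] card_sym_clique_type[OF partite C(1,2)] by auto
  have "card (link (sym_verts n V) (sym_edge n V E) C)
      = (\<Sum>i\<in>{..n} - ?T. \<Prod>\<pi> | \<pi> permutes {..n}. type_degree n V E (\<pi> ` ?T) (\<pi> i))"
    using card_sym_link[OF partite fin regular C(1,2)] .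
  also have "\<dots> = (\<Sum>i\<in>{..n} - ?T. ?d)"
    using T C(3) by (intro sum.cong refl prod_permutations_image_point_eq) auto
  also have "\<dots> = (Suc n - ?m) * ?d"
    using T by (simp add: card_Diff_subset finite_subset)
  finally show ?thesis .
qed

theorem mainTheorem9:
  fixes n :: nat and V :: "nat \<Rightarrow> 'a set" and E :: "'a \<Rightarrow> 'a \<Rightarrow> bool"
  assumes "partite_graph n V E"
    and "\<forall>i\<le>n. finite (V i)"
    and "partite_type_regular n V E"
  shows "hyper_regular n (\<Union>i\<le>n. sym_part n V i) (sym_edge n V E)"
  unfolding hyper_regular_def
proof (intro allI impI)
  fix m :: nat assume "1 \<le> m \<and> m \<le> n"
  then have "card (link (sym_verts n V) (sym_edge n V E) C)
      = (Suc n - m) * (\<Prod>\<pi> | \<pi> permutes {..n}. type_degree n V E (\<pi> ` {..<m}) (\<pi> m))"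
    if "C \<subseteq> sym_verts n V \<and> is_clique (sym_edge n V E) C \<and> card C = m" for C
    using that card_sym_link_eq[OF assms] by auto
  then show "\<exists>d. \<forall>C. C \<subseteq> sym_verts n V \<and> is_clique (sym_edge n V E) C \<and> card C = m \<longrightarrow>
      card (link (sym_verts n V) (sym_edge n V E) C) = d"
    by blast
qed

end
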